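(* Let $H$ be a complex Hilbert space and $\{\mathcal{U}(t)\}_{t\geq 0}$ a strongly continuous semigroup on $H$ with generator $\mathcal{L}$. Let $z\in D(\mathcal{L})\cap D(\mathcal{L}^\dagger)$ with $z\neq0$, let $\mathcal{P}:=(\cdot,z)(z,z)^{-1}z$ and $\mathcal{Q}:=1-\mathcal{P}$. Let $\{\mathcal{G}(t)\}_{t\geq0}$ be the strongly continuous semigroup generated by $\overline{\mathcal{QL}}\mathcal{Q}$ and $\{e^{\mathcal{LQ}t}\}_{t\geq0}$ the strongly continuous semigroup generated by $\mathcal{LQ}$. Then for all $t\geq0$, $\mathcal{G}(t)=\mathcal{P}+\mathcal{Q}e^{\mathcal{LQ}t}$.
   Context: The scalar product $(\cdot,\cdot)$ on $H$ is conjugate-linear in its second argument. The generator is $\mathcal{L}x:=\lim_{h\searrow 0}\frac1h[\mathcal{U}(h)x-x]$ on the set $D(\mathcal{L})$ where the limit exists. $\dagger$ denotes the adjoint, the overbar the closure; products of operators carry their natural domains, e.g. $D(\mathcal{LQ})=\{x:\mathcal{Q}x\in D(\mathcal{L})\}$, $D(\overline{\mathcal{QL}}\mathcal{Q})=\{x:\mathcal{Q}x\in D(\overline{\mathcal{QL}})\}$. *)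

theory Defs
  imports "HOL-Analysis.Analysis"
begin

text \<open>The library has no complex inner product spaces, so we introduce a class:
a real Banach space with a complex scalar multiplication (extending the real one)
and a complex inner product, linear in the first and conjugate-linear in the
second argument, which induces the norm.\<close>

class complex_hilbert = real_normed_vector + complete_space +
  fixes hscale :: "complex \<Rightarrow> 'a \<Rightarrow> 'a"
  fixes hinner :: "'a \<Rightarrow> 'a \<Rightarrow> complex"
  assumes hscale_of_real: "hscale (complex_of_real r) x = scaleR r x"
  assumes hscale_add_right: "hscale c (x + y) = hscale c x + hscale c y"
  assumes hscale_add_left: "hscale (c + d) x = hscale c x + hscale d x"
  assumes hscale_assoc: "hscale c (hscale d x) = hscale (c * d) x"
  assumes hinner_cnj: "hinner x y = cnj (hinner y x)"
  assumes hinner_add_left: "hinner (x + y) w = hinner x w + hinner y w"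
  assumes hinner_scale_left: "hinner (hscale c x) y = c * hinner x y"
  assumes norm_hinner: "norm x = sqrt (Re (hinner x x))"

section \<open>Possibly unbounded operators, represented by their graphs\<close>

type_synonym 'a op = "('a \<times> 'a) set"

definition op_dom :: "'a op \<Rightarrow> 'a set" where
  "op_dom A = Domain A"

definition graph :: "('a \<Rightarrow> 'a) \<Rightarrow> 'a op" where
  "graph f = {(x, f x) | x. True}"

text \<open>Products with natural domains: \<open>A B\<close> for \<open>B\<close> everywhere defined, and \<open>B A\<close>.\<close>
definition op_comp_right :: "'a op \<Rightarrow> ('a \<Rightarrow> 'a) \<Rightarrow> 'a op" where
  "op_comp_right A f = {(x, y). (f x, y) \<in> A}"

definition op_comp_left :: "('a \<Rightarrow> 'a) \<Rightarrow> 'a op \<Rightarrow> 'a op" where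
  "op_comp_left f A = {(x, f y) | x y. (x, y) \<in> A}"

definition op_adj :: "'a::complex_hilbert op \<Rightarrow> 'a op" where
  "op_adj A = {(y, w). \<forall>(x, v) \<in> A. hinner v y = hinner x w}"

definition op_closure :: "'a::complex_hilbert op \<Rightarrow> 'a op" where
  "op_closure A = closure A"

definition bounded_clinear_op :: "('a::complex_hilbert \<Rightarrow> 'a) \<Rightarrow> bool" where
  "bounded_clinear_op T \<longleftrightarrow> bounded_linear T \<and> (\<forall>c x. T (hscale c x) = hscale c (T x))"

definition C0_semigroup :: "(real \<Rightarrow> 'a::complex_hilbert \<Rightarrow> 'a) \<Rightarrow> bool" where
  "C0_semigroup U \<longleftrightarrow>
     (\<forall>t\<ge>0. bounded_clinear_op (U t)) \<and>
     U 0 = id \<and>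
     (\<forall>s\<ge>0. \<forall>t\<ge>0. U (s + t) = U s \<circ> U t) \<and>
     (\<forall>x. continuous_on {0..} (\<lambda>t. U t x))"

definition sg_generator :: "(real \<Rightarrow> 'a::complex_hilbert \<Rightarrow> 'a) \<Rightarrow> 'a op" where
  "sg_generator U = {(x, y). ((\<lambda>h. (1 / h) *\<^sub>R (U h x - x)) \<longlongrightarrow> y) (at_right 0)}"

definition projP :: "'a::complex_hilbert \<Rightarrow> 'a \<Rightarrow> 'a" where
  "projP z x = hscale (hinner x z / hinner z z) z"

definition projQ :: "'a::complex_hilbert \<Rightarrow> 'a \<Rightarrow> 'a" where
  "projQ z x = x - projP z x"

end

theory Submission
  imports Defs
begin

text \<open>For \<open>x\<close> in the domain of the generator \<open>\<L>\<Q>\<close> of \<open>E\<close>, with \<open>v = \<L>\<Q> x\<close>, the curve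
  \<open>y(s) = \<P> x + \<Q> E(s) x\<close> satisfies \<open>\<Q> y(s) = \<Q> E(s) x\<close> and \<open>\<L>\<Q> E(s) x = E(s) v\<close>, so
  \<open>y(s)\<close> lies in the domain of \<open>\<Q>\<L>\<Q> \<subseteq> closure(\<Q>\<L>)\<Q>\<close> with image \<open>\<Q> E(s) v = y'(s)\<close>.
  Thus \<open>y\<close> solves the abstract Cauchy problem for the generator of \<open>G\<close>, and such solutions
  are unique: \<open>s \<mapsto> G(t - s) y(s)\<close> has derivative zero (this needs the local uniform bound on
  \<open>G\<close> from Banach--Steinhaus), so \<open>G(t) x = y(t)\<close>. Both sides of the identity are bounded
  operators and the domain of the generator of \<open>E\<close> is dense, so they agree everywhere.\<close>

subclass (in complex_hilbert) banach ..

context complex_hilbert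
begin

lemma hinner_add_right: "hinner x (y + w) = hinner x y + hinner x w"
  by (metis hinner_cnj hinner_add_left complex_cnj_add)

lemma hinner_scale_right: "hinner x (hscale c y) = cnj c * hinner x y"
  by (metis hinner_cnj hinner_scale_left complex_cnj_mult)

lemma hinner_scaleR_left: "hinner (r *\<^sub>R x) y = of_real r * hinner x y"
  by (metis hscale_of_real hinner_scale_left)

lemma hinner_diff_left: "hinner (x - w) y = hinner x y - hinner w y"
  using hinner_add_left[of "x - w" w y] by (simp add: eq_diff_eq)

lemma hinner_self: "hinner x x = of_real ((norm x)\<^sup>2)"
proof -
  have "Im (hinner x x) = 0"
    using hinner_cnj[of x x] by (metis cnj.sel(2) equation_minus_iff neg_equal_zero)
  moreover have "Re (hinner x x) \<ge> 0"
    using norm_hinner[of x] by (metis norm_ge_zero real_sqrt_ge_0_iff)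
  ultimately show ?thesis
    by (simp add: complex_eq_iff norm_hinner)
qed

lemma hinner_self_eq_0 [simp]: "hinner x x = 0 \<longleftrightarrow> x = 0"
  by (simp add: hinner_self)

end

lemma projP_add: "projP z (x + y) = projP z x + projP z y"
  by (simp add: projP_def hinner_add_left add_divide_distrib hscale_add_left)

lemma projP_scaleR: "projP z (r *\<^sub>R x) = r *\<^sub>R projP z x"
  unfolding projP_def hinner_scaleR_left
  by (metis hscale_assoc hscale_of_real times_divide_eq_right)

lemma norm_projP_le:
  fixes z :: "'a::complex_hilbert"
  assumes "z \<noteq> 0"
  shows "norm (projP z x) \<le> norm x"
proof -
  define a where "a = hinner x z / hinner z z"
  define w where "w = x - hscale a z"
  have wz: "hinner w z = 0"
    using assms by (simp add: w_def a_def hinner_diff_left hinner_scale_left)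
  then have zw: "hinner z w = 0"
    using hinner_cnj[of z w] by simp
  have "x = w + hscale a z"
    by (simp add: w_def)
  then have "hinner x x = hinner w w + hinner (hscale a z) (hscale a z)"
    by (simp add: hinner_add_left hinner_add_right hinner_scale_left hinner_scale_right wz zw)
  then have "(norm x)\<^sup>2 = (norm w)\<^sup>2 + (norm (hscale a z))\<^sup>2"
    by (metis hinner_self of_real_add of_real_eq_iff)
  then have "(norm (hscale a z))\<^sup>2 \<le> (norm x)\<^sup>2"
    by simp
  then have "norm (hscale a z) \<le> norm x"
    by (simp add: power2_le_iff_abs_le)
  then show ?thesis
    by (simp add: projP_def a_def)
qed

lemma bounded_linear_projP: "z \<noteq> 0 \<Longrightarrow> bounded_linear (projP z)"
  by (rule bounded_linear_intro[where K = 1]) (simp_all add: projP_add projP_scaleR norm_projP_le)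

lemma bounded_linear_projQ: "z \<noteq> 0 \<Longrightarrow> bounded_linear (projQ z)"
  unfolding projQ_def[abs_def] by (intro bounded_linear_sub bounded_linear_ident bounded_linear_projP)

lemma projP_projP: "z \<noteq> 0 \<Longrightarrow> projP z (projP z x) = projP z x"
  by (simp add: projP_def hinner_scale_left)

lemma projQ_projP: "z \<noteq> 0 \<Longrightarrow> projQ z (projP z x) = 0"
  by (simp add: projQ_def projP_projP)

lemma projQ_projQ:
  assumes "z \<noteq> 0"
  shows "projQ z (projQ z x) = projQ z x"
proof -
  interpret bounded_linear "projP z"
    using assms by (rule bounded_linear_projP)
  show ?thesis
    by (simp add: projQ_def diff projP_projP assms)
qed

section \<open>Difference quotients and uniform boundedness\<close>

lemma has_vector_derivative_iff_diff_quotient: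
  fixes f :: "real \<Rightarrow> 'a::real_normed_vector"
  shows "(f has_vector_derivative D) (at s within S) \<longleftrightarrow>
    ((\<lambda>r. (1 / (r - s)) *\<^sub>R (f r - f s)) \<longlongrightarrow> D) (at s within S)"
proof -
  have "norm ((1 / norm (r - s)) *\<^sub>R (f r - (f s + (r - s) *\<^sub>R D)))
      = norm ((1 / (r - s)) *\<^sub>R (f r - f s) - D)" if "r \<noteq> s" for r
  proof -
    have "(1 / (r - s)) *\<^sub>R (f r - (f s + (r - s) *\<^sub>R D))
        = (1 / (r - s)) *\<^sub>R (f r - f s) - (1 / (r - s)) *\<^sub>R ((r - s) *\<^sub>R D)"
      by (simp only: scaleR_diff_right scaleR_add_right diff_diff_eq)
    then have "(1 / (r - s)) *\<^sub>R (f r - f s) - D = (1 / (r - s)) *\<^sub>R (f r - (f s + (r - s) *\<^sub>R D))"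
      using that by simp
    then show ?thesis
      by simp
  qed
  then have norms_eq: "\<forall>\<^sub>F r in at s within S. norm ((1 / norm (r - s)) *\<^sub>R (f r - (f s + (r - s) *\<^sub>R D)))
      = norm ((1 / (r - s)) *\<^sub>R (f r - f s) - D)"
    by (auto simp: eventually_at_filter)
  have "(f has_vector_derivative D) (at s within S) \<longleftrightarrow>
    ((\<lambda>r. (1 / norm (r - s)) *\<^sub>R (f r - (f s + (r - s) *\<^sub>R D))) \<longlongrightarrow> 0) (at s within S)"
    by (simp add: has_vector_derivative_def has_derivative_within bounded_linear_scaleR_left)
  also have "\<dots> \<longleftrightarrow>
    ((\<lambda>r. norm ((1 / norm (r - s)) *\<^sub>R (f r - (f s + (r - s) *\<^sub>R D)))) \<longlongrightarrow> 0) (at s within S)"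
    by (rule tendsto_norm_zero_iff[symmetric])
  also have "\<dots> \<longleftrightarrow> ((\<lambda>r. norm ((1 / (r - s)) *\<^sub>R (f r - f s) - D)) \<longlongrightarrow> 0) (at s within S)"
    by (rule tendsto_cong[OF norms_eq])
  also have "\<dots> \<longleftrightarrow> ((\<lambda>r. (1 / (r - s)) *\<^sub>R (f r - f s)) \<longlongrightarrow> D) (at s within S)"
    by (simp add: tendsto_norm_zero_iff Lim_null[symmetric])
  finally show ?thesis .
qed

lemma at_left_to_right_0: "at_left (t::real) = filtermap (\<lambda>h. t - h) (at_right 0)"
  by (simp add: at_left_minus at_right_to_0[of "- t"] filtermap_filtermap)

lemma integral_right_diff_quotient:
  fixes f :: "real \<Rightarrow> 'a::banach"
  assumes f: "continuous_on {0..} f" and a: "a \<ge> 0"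
  shows "((\<lambda>k. (1 / k) *\<^sub>R (integral {0..a + k} f - integral {0..a} f)) \<longlongrightarrow> f a) (at_right 0)"
proof -
  have "continuous_on {0..a + 1} f"
    using continuous_on_subset[OF f] by auto
  then have "((\<lambda>u. integral {0..u} f) has_vector_derivative f a) (at a within {0..a + 1})"
    using a by (intro integral_has_vector_derivative) auto
  then have "((\<lambda>u. integral {0..u} f) has_vector_derivative f a) (at a within {a..a + 1})"
    by (rule has_vector_derivative_within_subset) (use a in auto)
  then have "((\<lambda>r. (1 / (r - a)) *\<^sub>R (integral {0..r} f - integral {0..a} f)) \<longlongrightarrow> f a) (at_right a)"
    unfolding has_vector_derivative_iff_diff_quotient at_within_Icc_at_right[of a "a + 1", simplified] .
  then show ?thesis
    by (simp add: at_right_to_0[of a] filterlim_filtermap add.commute)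
qed

lemma bounded_linear_norm_le_of_ball:
  assumes f: "bounded_linear f" and r: "r > 0"
    and B: "\<And>y. y \<in> ball x0 r \<Longrightarrow> norm (f y) \<le> B"
  shows "norm (f x) \<le> (4 * B / r) * norm x"
proof (cases "x = 0")
  case True
  then show ?thesis
    using linear_0[OF bounded_linear.linear[OF f]] by simp
next
  case False
  interpret bounded_linear f by (fact f)
  define c where "c = r / (2 * norm x)"
  have c: "c > 0"
    using r False by (simp add: c_def)
  have "norm (f (x0 + c *\<^sub>R x)) \<le> B"
    using r False by (intro B) (simp add: c_def dist_norm)
  moreover have "norm (f x0) \<le> B"
    using r by (intro B) simp
  moreover have "c * norm (f x) = norm (f (x0 + c *\<^sub>R x) - f x0)"
    using c by (simp add: add scale)
  ultimately have "c * norm (f x) \<le> 2 * B"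
    using norm_triangle_ineq4[of "f (x0 + c *\<^sub>R x)" "f x0"] by linarith
  then show ?thesis
    using c r False by (simp add: c_def field_simps)
qed

text \<open>Banach--Steinhaus: the Baire category theorem yields a ball on which the family is
  uniformly bounded.\<close>

lemma uniform_boundedness:
  fixes f :: "'i \<Rightarrow> 'a::banach \<Rightarrow> 'b::real_normed_vector"
  assumes bl: "\<And>i. i \<in> I \<Longrightarrow> bounded_linear (f i)"
    and pointwise: "\<And>x. \<exists>B. \<forall>i\<in>I. norm (f i x) \<le> B"
  shows "\<exists>M. \<forall>i\<in>I. \<forall>x. norm (f i x) \<le> M * norm x"
proof -
  define A where "A n = (\<Inter>i\<in>I. {x. norm (f i x) \<le> real n})" for n :: nat
  have closed: "closed (A n)" for n
    unfolding A_def
    by (intro closed_INT ballI closed_Collect_le continuous_intros linear_continuous_on bl)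
  have "x \<in> \<Union>(range A)" for x
  proof -
    obtain B where "\<forall>i\<in>I. norm (f i x) \<le> B"
      using pointwise by blast
    moreover obtain n where "B \<le> real n"
      using real_arch_simple by blast
    ultimately have "x \<in> A n"
      by (auto simp: A_def intro: order_trans)
    then show ?thesis
      by blast
  qed
  then have cover: "\<Union>(range A) = UNIV"
    by blast
  have "\<exists>n. interior (A n) \<noteq> {}"
  proof (rule ccontr)
    assume "\<not> ?thesis"
    then have "euclidean interior_of \<Union>(range A) = {}"
      by (intro Baire_category_alt) (auto simp: completely_metrizable_space_euclidean closed)
    then show False
      by (simp add: cover)
  qed
  then obtain n x0 r where r: "r > 0" "ball x0 r \<subseteq> A n"
    by (meson equals0I mem_interior)
  have "norm (f i x) \<le> (4 * real n / r) * norm x" if "i \<in> I" for i x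
    using r that by (intro bounded_linear_norm_le_of_ball[OF bl]) (auto simp: A_def)
  then show ?thesis
    by blast
qed

section \<open>Strongly continuous semigroups\<close>

lemma C0_semigroup_bounded_linear: "C0_semigroup T \<Longrightarrow> t \<ge> 0 \<Longrightarrow> bounded_linear (T t)"
  by (simp add: C0_semigroup_def bounded_clinear_op_def)

lemma C0_semigroup_0: "C0_semigroup T \<Longrightarrow> T 0 x = x"
  by (simp add: C0_semigroup_def)

lemma C0_semigroup_add:
  "C0_semigroup T \<Longrightarrow> s \<ge> 0 \<Longrightarrow> t \<ge> 0 \<Longrightarrow> T (s + t) x = T s (T t x)"
  by (simp add: C0_semigroup_def)

lemma C0_semigroup_commute:
  "C0_semigroup T \<Longrightarrow> s \<ge> 0 \<Longrightarrow> t \<ge> 0 \<Longrightarrow> T s (T t x) = T t (T s x)"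
  by (metis C0_semigroup_add add.commute)

lemma C0_semigroup_continuous_orbit: "C0_semigroup T \<Longrightarrow> continuous_on {0..} (\<lambda>t. T t x)"
  by (simp add: C0_semigroup_def)

lemma C0_semigroup_locally_bounded:
  fixes T :: "real \<Rightarrow> 'a::complex_hilbert \<Rightarrow> 'a"
  assumes T: "C0_semigroup T"
  obtains M where "\<And>t x. t \<in> {0..\<tau>} \<Longrightarrow> norm (T t x) \<le> M * norm x"
proof -
  have "\<exists>B. \<forall>t\<in>{0..\<tau>}. norm (T t x) \<le> B" for x
  proof -
    have "compact ((\<lambda>t. T t x) ` {0..\<tau>})"
      by (rule compact_continuous_image[OF continuous_on_subset[OF C0_semigroup_continuous_orbit[OF T]]])
         auto
    then show ?thesis
      by (auto dest!: compact_imp_bounded simp: bounded_iff)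
  qed
  then show ?thesis
    using uniform_boundedness[of "{0..\<tau>}" T] C0_semigroup_bounded_linear[OF T] that
    by (metis atLeastAtMost_iff)
qed

lemma C0_semigroup_tendsto:
  fixes T :: "real \<Rightarrow> 'a::complex_hilbert \<Rightarrow> 'a"
  assumes T: "C0_semigroup T" and a: "a \<ge> 0"
    and f: "(f \<longlongrightarrow> a) F" "\<forall>\<^sub>F x in F. f x \<ge> 0"
    and g: "(g \<longlongrightarrow> u) F"
  shows "((\<lambda>x. T (f x) (g x)) \<longlongrightarrow> T a u) F"
proof -
  obtain M where M: "\<And>t x. t \<in> {0..a + 1} \<Longrightarrow> norm (T t x) \<le> M * norm x"
    using C0_semigroup_locally_bounded[OF T, where \<tau> = "a + 1"] by blast
  have "\<forall>\<^sub>F x in F. f x < a + 1"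
    using order_tendstoD(2)[OF f(1), of "a + 1"] by simp
  then have f_range: "\<forall>\<^sub>F x in F. f x \<in> {0..a + 1}"
    using f(2) by eventually_elim auto
  have "((\<lambda>x. T (f x) (g x - u)) \<longlongrightarrow> 0) F"
  proof (rule Lim_null_comparison)
    show "\<forall>\<^sub>F x in F. norm (T (f x) (g x - u)) \<le> M * norm (g x - u)"
      using f_range by eventually_elim (rule M)
    show "((\<lambda>x. M * norm (g x - u)) \<longlongrightarrow> 0) F"
      using tendsto_mult_right_zero[OF tendsto_norm_zero[OF LIM_zero[OF g]]] .
  qed
  moreover have "((\<lambda>x. T (f x) u) \<longlongrightarrow> T a u) F"
    using continuous_on_tendsto_compose[OF C0_semigroup_continuous_orbit[OF T] f(1)] a f(2)
    by simp
  ultimately have "((\<lambda>x. T (f x) (g x - u) + T (f x) u) \<longlongrightarrow> 0 + T a u) F"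
    by (rule tendsto_add)
  moreover have "\<forall>\<^sub>F x in F. T (f x) (g x - u) + T (f x) u = T (f x) (g x)"
    using f(2) by eventually_elim
      (simp add: linear_diff[OF bounded_linear.linear[OF C0_semigroup_bounded_linear[OF T]]])
  ultimately show ?thesis
    by (simp add: Lim_transform_eventually)
qed

lemma sg_generator_tendsto:
  "(x, v) \<in> sg_generator T \<Longrightarrow> ((\<lambda>h. (1 / h) *\<^sub>R (T h x - x)) \<longlongrightarrow> v) (at_right 0)"
  by (simp add: sg_generator_def)

lemma sg_generator_invariant:
  assumes T: "C0_semigroup T" and xv: "(x, v) \<in> sg_generator T" and s: "s \<ge> 0"
  shows "(T s x, T s v) \<in> sg_generator T"
proof -
  interpret bounded_linear "T s"
    using C0_semigroup_bounded_linear[OF T s] .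
  have "((\<lambda>h. T s ((1 / h) *\<^sub>R (T h x - x))) \<longlongrightarrow> T s v) (at_right 0)"
    by (rule tendsto[OF sg_generator_tendsto[OF xv]])
  moreover have "\<forall>\<^sub>F h in at_right 0. T s ((1 / h) *\<^sub>R (T h x - x)) = (1 / h) *\<^sub>R (T h (T s x) - T s x)"
    using eventually_at_right_less[of "0::real"]
    by eventually_elim (simp add: scale diff C0_semigroup_commute[OF T _ s])
  ultimately show ?thesis
    unfolding sg_generator_def by (simp add: Lim_transform_eventually)
qed

lemma C0_semigroup_right_derivative:
  fixes T :: "real \<Rightarrow> 'a::complex_hilbert \<Rightarrow> 'a"
  assumes T: "C0_semigroup T" and xv: "(x, v) \<in> sg_generator T" and t: "t \<ge> 0"
  shows "((\<lambda>r. (1 / (r - t)) *\<^sub>R (T r x - T t x)) \<longlongrightarrow> T t v) (at_right t)"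
proof -
  interpret bounded_linear "T t"
    using C0_semigroup_bounded_linear[OF T t] .
  have "((\<lambda>h. T t ((1 / h) *\<^sub>R (T h x - x))) \<longlongrightarrow> T t v) (at_right 0)"
    by (rule tendsto[OF sg_generator_tendsto[OF xv]])
  moreover have "\<forall>\<^sub>F h in at_right 0.
      T t ((1 / h) *\<^sub>R (T h x - x)) = (1 / (h + t - t)) *\<^sub>R (T (h + t) x - T t x)"
    using eventually_at_right_less[of "0::real"]
    by eventually_elim (simp add: scale diff C0_semigroup_add[OF T _ t] C0_semigroup_commute[OF T _ t])
  ultimately show ?thesis
    by (simp add: at_right_to_0[of t] filterlim_filtermap Lim_transform_eventually)
qed

lemma C0_semigroup_left_derivative:
  fixes T :: "real \<Rightarrow> 'a::complex_hilbert \<Rightarrow> 'a"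
  assumes T: "C0_semigroup T" and xv: "(x, v) \<in> sg_generator T" and t: "t > 0"
  shows "((\<lambda>r. (1 / (r - t)) *\<^sub>R (T r x - T t x)) \<longlongrightarrow> T t v) (at_left t)"
proof -
  have small: "\<forall>\<^sub>F h in at_right 0. 0 < h \<and> h < t"
    using t by (auto simp: eventually_at_right_field)
  have "((\<lambda>h. T (t - h) ((1 / h) *\<^sub>R (T h x - x))) \<longlongrightarrow> T t v) (at_right 0)"
  proof (rule C0_semigroup_tendsto[OF T _ _ _ sg_generator_tendsto[OF xv]])
    show "((\<lambda>h. t - h) \<longlongrightarrow> t) (at_right 0)"
      using tendsto_diff[OF tendsto_const tendsto_ident_at, of t 0 "{0<..}"] by simp
    show "\<forall>\<^sub>F h in at_right 0. t - h \<ge> 0"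
      using small by eventually_elim simp
  qed (use t in simp)
  moreover have "\<forall>\<^sub>F h in at_right 0.
      T (t - h) ((1 / h) *\<^sub>R (T h x - x)) = (1 / (t - h - t)) *\<^sub>R (T (t - h) x - T t x)"
    using small
  proof eventually_elim
    case (elim h)
    interpret bounded_linear "T (t - h)"
      using C0_semigroup_bounded_linear[OF T, of "t - h"] elim by simp
    have "T t x = T (t - h) (T h x)"
      using C0_semigroup_add[OF T, of "t - h" h x] elim by simp
    then show ?case
      by (simp add: scale diff) (simp add: divide_minus_right flip: scaleR_minus_right)
  qed
  ultimately show ?thesis
    by (simp add: at_left_to_right_0 filterlim_filtermap Lim_transform_eventually)
qed

lemma C0_semigroup_orbit_has_vector_derivative:
  fixes T :: "real \<Rightarrow> 'a::complex_hilbert \<Rightarrow> 'a"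
  assumes T: "C0_semigroup T" and xv: "(x, v) \<in> sg_generator T" and t: "t \<ge> 0"
  shows "((\<lambda>s. T s x) has_vector_derivative T t v) (at t within {0..})"
proof (cases "t = 0")
  case True
  then show ?thesis
    using C0_semigroup_right_derivative[OF T xv t]
    by (simp add: has_vector_derivative_iff_diff_quotient at_within_Ici_at_right)
next
  case False
  then have "at t within {0..} = at t"
    using t by (intro at_within_interior) (simp add: interior_Ici)
  then show ?thesis
    using C0_semigroup_right_derivative[OF T xv t] C0_semigroup_left_derivative[OF T xv] t False
    by (simp add: has_vector_derivative_iff_diff_quotient filterlim_at_split)
qed

lemma C0_semigroup_integral_shift:
  fixes T :: "real \<Rightarrow> 'a::complex_hilbert \<Rightarrow> 'a"
  assumes T: "C0_semigroup T" and h: "h \<ge> 0" and k: "k \<ge> 0"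
  shows "T k (integral {0..h} (\<lambda>r. T r x))
    = integral {0..h + k} (\<lambda>r. T r x) - integral {0..k} (\<lambda>r. T r x)"
proof -
  have integrable: "(\<lambda>r. T r x) integrable_on {a..b}" if "a \<ge> 0" for a b
    using that by (intro integrable_continuous_real
        continuous_on_subset[OF C0_semigroup_continuous_orbit[OF T]]) auto
  have "T k (integral {0..h} (\<lambda>r. T r x)) = integral {0..h} (T k \<circ> (\<lambda>r. T r x))"
    by (rule integral_linear[OF integrable C0_semigroup_bounded_linear[OF T k], symmetric]) simp
  also have "\<dots> = integral {0..h} ((\<lambda>r. T r x) \<circ> (+) k)"
    by (rule integral_cong) (simp add: C0_semigroup_add[OF T k])
  also have "\<dots> = integral {k..h + k} (\<lambda>r. T r x)"
    by (simp add: integral_shift_Icc_real add.commute)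
  also have "\<dots> = integral {0..h + k} (\<lambda>r. T r x) - integral {0..k} (\<lambda>r. T r x)"
  proof -
    have "integral {0..k} (\<lambda>r. T r x) + integral {k..h + k} (\<lambda>r. T r x)
        = integral {0..h + k} (\<lambda>r. T r x)"
      using h k by (intro Henstock_Kurzweil_Integration.integral_combine integrable) auto
    then show ?thesis
      by (metis add_diff_cancel_left')
  qed
  finally show ?thesis .
qed

lemma sg_generator_integral_mean:
  fixes T :: "real \<Rightarrow> 'a::complex_hilbert \<Rightarrow> 'a"
  assumes T: "C0_semigroup T" and h: "h > 0"
  shows "((1 / h) *\<^sub>R integral {0..h} (\<lambda>r. T r x), (1 / h) *\<^sub>R (T h x - x)) \<in> sg_generator T"
proof -
  define J where "J u = integral {0..u} (\<lambda>r. T r x)" for u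
  have quotient: "((\<lambda>k. (1 / k) *\<^sub>R (J (a + k) - J a)) \<longlongrightarrow> T a x) (at_right 0)" if "a \<ge> 0" for a
    unfolding J_def by (rule integral_right_diff_quotient[OF C0_semigroup_continuous_orbit[OF T] that])
  have "((\<lambda>k. (1 / h) *\<^sub>R ((1 / k) *\<^sub>R (J (h + k) - J h) - (1 / k) *\<^sub>R (J (0 + k) - J 0)))
      \<longlongrightarrow> (1 / h) *\<^sub>R (T h x - T 0 x)) (at_right 0)"
    using h by (intro tendsto_intros quotient) auto
  moreover have "\<forall>\<^sub>F k in at_right 0.
      (1 / h) *\<^sub>R ((1 / k) *\<^sub>R (J (h + k) - J h) - (1 / k) *\<^sub>R (J (0 + k) - J 0))
      = (1 / k) *\<^sub>R (T k ((1 / h) *\<^sub>R J h) - (1 / h) *\<^sub>R J h)"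
    using eventually_at_right_less[of "0::real"]
  proof eventually_elim
    case (elim k)
    interpret bounded_linear "T k"
      using C0_semigroup_bounded_linear[OF T] elim by simp
    have "J (h + k) = J k + T k (J h)"
      using C0_semigroup_integral_shift[OF T, of h k x] h elim by (simp add: J_def)
    then show ?case
      by (simp add: J_def[of 0] scale algebra_simps)
  qed
  ultimately show ?thesis
    unfolding sg_generator_def by (simp add: C0_semigroup_0[OF T] J_def Lim_transform_eventually)
qed

lemma C0_semigroup_generator_dense:
  fixes T :: "real \<Rightarrow> 'a::complex_hilbert \<Rightarrow> 'a"
  assumes T: "C0_semigroup T"
  shows "x \<in> closure (Domain (sg_generator T))"
proof (rule Lim_in_closed_set[OF closed_closure _ trivial_limit_at_right_real])
  show "\<forall>\<^sub>F h in at_right 0. (1 / h) *\<^sub>R integral {0..h} (\<lambda>r. T r x) \<in> closure (Domain (sg_generator T))"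
    using eventually_at_right_less[of "0::real"]
    by eventually_elim (use sg_generator_integral_mean[OF T] closure_subset in blast)
  show "((\<lambda>h. (1 / h) *\<^sub>R integral {0..h} (\<lambda>r. T r x)) \<longlongrightarrow> x) (at_right 0)"
    using integral_right_diff_quotient[OF C0_semigroup_continuous_orbit[OF T] order_refl]
    by (simp add: C0_semigroup_0[OF T])
qed

section \<open>The abstract Cauchy problem\<close>

lemma C0_semigroup_backward_orbit_has_vector_derivative:
  fixes G :: "real \<Rightarrow> 'a::complex_hilbert \<Rightarrow> 'a"
  assumes G: "C0_semigroup G" and uw: "(u, w) \<in> sg_generator G" and s: "s \<in> {0..t}"
  shows "((\<lambda>r. G (t - r) u) has_vector_derivative - G (t - s) w) (at s within {0..t})"
proof -
  have "((\<lambda>r. t - r) has_vector_derivative -1) (at s within {0..t})"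
    by (auto intro!: derivative_eq_intros)
  moreover have "((\<lambda>\<sigma>. G \<sigma> u) has_vector_derivative G (t - s) w) (at (t - s) within (\<lambda>r. t - r) ` {0..t})"
    by (rule has_vector_derivative_within_subset[OF C0_semigroup_orbit_has_vector_derivative[OF G uw]])
       (use s in auto)
  ultimately have "((\<lambda>\<sigma>. G \<sigma> u) \<circ> (\<lambda>r. t - r) has_vector_derivative (-1) *\<^sub>R G (t - s) w)
      (at s within {0..t})"
    by (rule vector_diff_chain_within)
  then show ?thesis
    by (simp add: o_def)
qed

lemma C0_semigroup_evolution_has_vector_derivative_0:
  fixes G :: "real \<Rightarrow> 'a::complex_hilbert \<Rightarrow> 'a"
  assumes G: "C0_semigroup G" and s: "s \<in> {0..t}"
    and dy: "(y has_vector_derivative y') (at s within {0..t})"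
    and gy: "(y s, y') \<in> sg_generator G"
  shows "((\<lambda>r. G (t - r) (y r)) has_vector_derivative 0) (at s within {0..t})"
proof -
  define q where "q r = (1 / (r - s)) *\<^sub>R (y r - y s)" for r
  have "((\<lambda>r. G (t - r) (q r)) \<longlongrightarrow> G (t - s) y') (at s within {0..t})"
  proof (rule C0_semigroup_tendsto[OF G])
    show "((\<lambda>r. t - r) \<longlongrightarrow> t - s) (at s within {0..t})"
      by (intro tendsto_intros)
    show "\<forall>\<^sub>F r in at s within {0..t}. t - r \<ge> 0"
      by (auto simp: eventually_at_filter)
    show "(q \<longlongrightarrow> y') (at s within {0..t})"
      using dy unfolding q_def has_vector_derivative_iff_diff_quotient .
  qed (use s in simp)
  moreover have "((\<lambda>r. (1 / (r - s)) *\<^sub>R (G (t - r) (y s) - G (t - s) (y s)))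
      \<longlongrightarrow> - G (t - s) y') (at s within {0..t})"
    using C0_semigroup_backward_orbit_has_vector_derivative[OF G gy s]
    by (simp add: has_vector_derivative_iff_diff_quotient)
  ultimately have "((\<lambda>r. G (t - r) (q r) + (1 / (r - s)) *\<^sub>R (G (t - r) (y s) - G (t - s) (y s)))
      \<longlongrightarrow> G (t - s) y' + - G (t - s) y') (at s within {0..t})"
    by (rule tendsto_add)
  moreover have "\<forall>\<^sub>F r in at s within {0..t}.
      G (t - r) (q r) + (1 / (r - s)) *\<^sub>R (G (t - r) (y s) - G (t - s) (y s))
      = (1 / (r - s)) *\<^sub>R (G (t - r) (y r) - G (t - s) (y s))"
    unfolding eventually_at_filter
  proof (intro always_eventually allI impI)
    fix r assume r: "r \<noteq> s" "r \<in> {0..t}"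
    interpret bounded_linear "G (t - r)"
      using C0_semigroup_bounded_linear[OF G, of "t - r"] r by simp
    show "G (t - r) (q r) + (1 / (r - s)) *\<^sub>R (G (t - r) (y s) - G (t - s) (y s))
        = (1 / (r - s)) *\<^sub>R (G (t - r) (y r) - G (t - s) (y s))"
      by (simp add: q_def diff scale scaleR_diff_right)
  qed
  ultimately show ?thesis
    by (simp add: has_vector_derivative_iff_diff_quotient Lim_transform_eventually)
qed

lemma C0_semigroup_Cauchy_problem_unique:
  fixes G :: "real \<Rightarrow> 'a::complex_hilbert \<Rightarrow> 'a"
  assumes G: "C0_semigroup G" and t: "t \<ge> 0"
    and dy: "\<And>s. s \<in> {0..t} \<Longrightarrow> (y has_vector_derivative y' s) (at s within {0..t})"
    and gy: "\<And>s. s \<in> {0..t} \<Longrightarrow> (y s, y' s) \<in> sg_generator G"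
  shows "G t (y 0) = y t"
proof -
  obtain c where "\<And>r. r \<in> {0..t} \<Longrightarrow> G (t - r) (y r) = c"
    using has_vector_derivative_zero_constant[OF convex_real_interval(5)
        C0_semigroup_evolution_has_vector_derivative_0[OF G _ dy gy]]
    by blast
  then show ?thesis
    using t by (metis atLeastAtMost_iff order_refl diff_zero diff_self C0_semigroup_0[OF G])
qed

lemma op_closure_comp_leftI:
  fixes A :: "'a::complex_hilbert op"
  assumes "(x, y) \<in> A"
  shows "(x, f y) \<in> op_closure (op_comp_left f A)"
proof -
  have "(x, f y) \<in> op_comp_left f A"
    using assms by (auto simp: op_comp_left_def)
  then show ?thesis
    unfolding op_closure_def by (rule subsetD[OF closure_subset])
qed

lemma projected_orbit_solves_QLQ:
  fixes E :: "real \<Rightarrow> 'a::complex_hilbert \<Rightarrow> 'a" and L :: "'a op"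
  assumes z: "z \<noteq> 0" and E: "C0_semigroup E"
    and E_gen: "sg_generator E = op_comp_right L (projQ z)"
    and xv: "(x, v) \<in> sg_generator E" and s: "s \<ge> 0"
  shows "((\<lambda>r. projP z x + projQ z (E r x)) has_vector_derivative projQ z (E s v)) (at s within {0..})"
    and "(projP z x + projQ z (E s x), projQ z (E s v))
      \<in> op_comp_right (op_closure (op_comp_left (projQ z) L)) (projQ z)"
proof -
  interpret Q: bounded_linear "projQ z"
    using z by (rule bounded_linear_projQ)
  show "((\<lambda>r. projP z x + projQ z (E r x)) has_vector_derivative projQ z (E s v)) (at s within {0..})"
    using has_vector_derivative_add[OF has_vector_derivative_const
        Q.has_vector_derivative[OF C0_semigroup_orbit_has_vector_derivative[OF E xv s]]]
    by simp
  have "(projQ z (E s x), E s v) \<in> L"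
    using sg_generator_invariant[OF E xv s] by (simp add: E_gen op_comp_right_def)
  then have "(projQ z (E s x), projQ z (E s v)) \<in> op_closure (op_comp_left (projQ z) L)"
    by (rule op_closure_comp_leftI)
  moreover have "projQ z (projP z x + projQ z (E s x)) = projQ z (E s x)"
    by (simp add: Q.add projQ_projP[OF z] projQ_projQ[OF z])
  ultimately show "(projP z x + projQ z (E s x), projQ z (E s v))
      \<in> op_comp_right (op_closure (op_comp_left (projQ z) L)) (projQ z)"
    by (simp add: op_comp_right_def)
qed

lemma QLQ_semigroup_eq_on_generator_domain:
  fixes G E :: "real \<Rightarrow> 'a::complex_hilbert \<Rightarrow> 'a" and L :: "'a op"
  assumes x: "x \<in> Domain (sg_generator E)" and z: "z \<noteq> 0"
    and G: "C0_semigroup G"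
    and G_gen: "sg_generator G = op_comp_right (op_closure (op_comp_left (projQ z) L)) (projQ z)"
    and E: "C0_semigroup E" and E_gen: "sg_generator E = op_comp_right L (projQ z)"
    and t: "t \<ge> 0"
  shows "G t x = projP z x + projQ z (E t x)"
proof -
  obtain v where xv: "(x, v) \<in> sg_generator E"
    using x by blast
  note solves = projected_orbit_solves_QLQ[OF z E E_gen xv]
  have "G t (projP z x + projQ z (E 0 x)) = projP z x + projQ z (E t x)"
  proof (rule C0_semigroup_Cauchy_problem_unique[OF G t])
    fix s :: real
    assume s: "s \<in> {0..t}"
    show "((\<lambda>r. projP z x + projQ z (E r x)) has_vector_derivative projQ z (E s v)) (at s within {0..t})"
      using s by (intro has_vector_derivative_within_subset[OF solves(1)]) auto
    show "(projP z x + projQ z (E s x), projQ z (E s v)) \<in> sg_generator G"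
      using s solves(2) by (simp add: G_gen)
  qed
  then show ?thesis
    by (simp add: C0_semigroup_0[OF E] projQ_def)
qed

theorem corollary1:
  fixes U G E :: "real \<Rightarrow> 'a::complex_hilbert \<Rightarrow> 'a"
    and L :: "'a op"
    and z :: 'a
  assumes U_C0: "C0_semigroup U"
    and L_gen: "L = sg_generator U"
    and z_L: "z \<in> op_dom L"
    and z_adj: "z \<in> op_dom (op_adj L)"
    and z_ne: "z \<noteq> 0"
    and G_C0: "C0_semigroup G"
    and G_gen: "sg_generator G = op_comp_right (op_closure (op_comp_left (projQ z) L)) (projQ z)"
    and E_C0: "C0_semigroup E"
    and E_gen: "sg_generator E = op_comp_right L (projQ z)"
  shows "\<forall>t\<ge>0. G t = (\<lambda>x. projP z x + projQ z (E t x))"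
proof (intro allI impI ext)
  fix t :: real and x :: 'a
  assume t: "t \<ge> 0"
  have on_domain: "G t u = projP z u + projQ z (E t u)" if "u \<in> Domain (sg_generator E)" for u
    using that z_ne G_C0 G_gen E_C0 E_gen t by (rule QLQ_semigroup_eq_on_generator_domain)
  have "bounded_linear (\<lambda>u. projP z u + projQ z (E t u))"
    by (intro bounded_linear_add bounded_linear_projP[OF z_ne]
        bounded_linear_compose[OF bounded_linear_projQ[OF z_ne] C0_semigroup_bounded_linear[OF E_C0 t]])
  then have "closed {u. G t u = projP z u + projQ z (E t u)}"
    using C0_semigroup_bounded_linear[OF G_C0 t] by (intro closed_Collect_eq linear_continuous_on)
  then have "closure (Domain (sg_generator E)) \<subseteq> {u. G t u = projP z u + projQ z (E t u)}"
    using on_domain by (intro closure_minimal) auto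
  then show "G t x = projP z x + projQ z (E t x)"
    using C0_semigroup_generator_dense[OF E_C0, of x] by blast
qed

end
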